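(* Let voter types lie in $[\underline s,\overline s]$ with population distribution $F$ having a strictly positive density on $[\underline s,\overline s]$, and let the aggregate shock $r\in\mathbb R$ have distribution $G$ with a strictly positive density on $\mathbb R$. Assume there is no idiosyncratic uncertainty: the share of type-$s$ voters voting for the designer at shock $r$ is $v(s,r)=\mathbf 1\{s\geq r\}$ for all $(s,r)$. Let $s^m=F^{-1}(1/2)$ be the population median type. Then a districting plan $\mathcal H$ is optimal if and only if for $\mathcal H$-almost every district $P\in\operatorname{supp}(\mathcal H)$ there exists a voter type $s^P\geq s^m$ such that $\Pr_P(s=s^P)=\Pr_P(s<s^m)=1/2$. Moreover, under such a plan the designer wins district $P$ if and only if $r\leq s^P$.
   Context: A district is a Borel probability distribution $P$ on $[\underline s,\overline s]$ (the distribution of voter types in it). A districting plan is a Borel probability measure $\mathcal H$ on the space $\Delta[\underline s,\overline s]$ of such distributions (weak* topology) satisfying $\int P(S)\,d\mathcal H(P)=F(S)$ for every Borel $S\subseteq[\underline s,\overline s]$ (districts are equipopulous and together contain the whole population). At aggregate shock $r$, the designer wins district $P$ iff $\int v(s,r)\,dP(s)\geq 1/2$. The designer's expected seat share under $\mathcal H$ is $\int \Pr_{r\sim G}(\text{designer wins }P)\,d\mathcal H(P)$, and a plan is optimal if it maximizes this quantity over all districting plans. *)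

theory Defs
  imports "HOL-Probability.Probability"
begin

definition type_space :: "real \<Rightarrow> real \<Rightarrow> real measure" where
  "type_space sl su = restrict_space borel {sl..su}"

definition wins :: "(real \<Rightarrow> real \<Rightarrow> real) \<Rightarrow> real measure \<Rightarrow> real \<Rightarrow> bool" where
  "wins v P r \<longleftrightarrow> (\<integral>s. v s r \<partial>P) \<ge> 1/2"

definition districting_plan ::
  "real \<Rightarrow> real \<Rightarrow> real measure \<Rightarrow> real measure measure \<Rightarrow> bool" where
  "districting_plan sl su F H \<longleftrightarrow>
     sets H = sets (prob_algebra (type_space sl su)) \<and> prob_space H \<and>
     (\<forall>S \<in> sets (type_space sl su). (\<integral>P. measure P S \<partial>H) = measure F S)"

definition seat_share ::
  "real measure \<Rightarrow> (real \<Rightarrow> real \<Rightarrow> real) \<Rightarrow> real measure measure \<Rightarrow> ennreal" where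
  "seat_share G v H = (\<integral>\<^sup>+P. emeasure G {r. wins v P r} \<partial>H)"

definition optimal_plan ::
  "real \<Rightarrow> real \<Rightarrow> real measure \<Rightarrow> real measure \<Rightarrow> (real \<Rightarrow> real \<Rightarrow> real)
     \<Rightarrow> real measure measure \<Rightarrow> bool" where
  "optimal_plan sl su F G v H \<longleftrightarrow>
     districting_plan sl su F H \<and>
     (\<forall>H'. districting_plan sl su F H' \<longrightarrow> seat_share G v H' \<le> seat_share G v H)"

end

theory Submission
  imports Defs
begin

text \<open>Without idiosyncratic noise a district P is won exactly at the shocks r \<le> q(P), its upper
  median, so it contributes G(q(P)) to the seat share. Give a voter of type s the weight w(s) = G(sm)
  if s < sm and w(s) = 2 G(s) - G(sm) otherwise. Every district satisfies G(q(P)) \<le> \<integral> w dP: for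
  q(P) \<ge> sm the weight dominates the step function equal to 2 G(q(P)) - G(sm) on [q(P), \<infinity>) and to
  G(sm) below, whose P-mean is at least G(q(P)) because P puts mass at least 1/2 on [q(P), \<infinity>).
  Averaging over a plan bounds every seat share by \<integral> w dF. As G is strictly increasing, equality in
  a district without an atom at sm forces half of its mass onto q(P) > sm and the other half below
  sm; conversely, pairing independent draws from the two halves of F into two-point districts
  attains the bound.\<close>

lemma space_type_space [simp]: "space (type_space sl su) = {sl..su}"
  by (simp add: type_space_def space_restrict_space)

lemma sets_type_space_iff: "A \<in> sets (type_space sl su) \<longleftrightarrow> A \<subseteq> {sl..su} \<and> A \<in> sets borel"
  unfolding type_space_def by (subst sets_restrict_space_iff) auto

lemma measurable_type_space: "f \<in> borel \<rightarrow>\<^sub>M N \<Longrightarrow> f \<in> type_space sl su \<rightarrow>\<^sub>M N"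
  unfolding type_space_def by (rule measurable_restrict_space1)

lemma type_distributionD:
  assumes "P \<in> space (prob_algebra (type_space sl su))"
  shows "prob_space P" and "sets P = sets (type_space sl su)" and "space P = {sl..su}"
  using assms by (auto simp: space_prob_algebra dest: sets_eq_imp_space_eq)

definition upper_median :: "real measure \<Rightarrow> real" where
  "upper_median P = Sup {r. 1/2 \<le> measure P {s \<in> space P. r \<le> s}}"

lemma measure_upper_set_ge_limit:
  fixes M :: "real measure" and q c :: real
  assumes M: "finite_measure M"
    and sets: "\<And>r. {s \<in> space M. r \<le> s} \<in> sets M"
    and below: "\<And>r. r < q \<Longrightarrow> c \<le> measure M {s \<in> space M. r \<le> s}"
  shows "c \<le> measure M {s \<in> space M. q \<le> s}"
proof -
  interpret finite_measure M
    by (rule M)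
  define A where "A n = {s \<in> space M. q - 1 / real (Suc n) \<le> s}" for n
  have A_sets: "A n \<in> sets M" for n
    using sets by (simp add: A_def)
  have "1 / real (Suc n) \<le> 1 / real (Suc m)" if "m \<le> n" for m n
    using that by (intro divide_left_mono) auto
  then have "decseq A"
    by (force simp: A_def decseq_def)
  moreover have "(\<Inter>n. A n) = {s \<in> space M. q \<le> s}"
  proof (intro equalityI subsetI)
    fix x assume x: "x \<in> (\<Inter>n. A n)"
    have "(\<lambda>n. q - 1 / real (Suc n)) \<longlonglongrightarrow> q - 0"
      using LIMSEQ_inverse_real_of_nat by (intro tendsto_diff tendsto_const) (simp add: inverse_eq_divide)
    then have "q - 0 \<le> x"
      by (rule LIMSEQ_le_const2) (use x in \<open>auto simp: A_def\<close>)
    then show "x \<in> {s \<in> space M. q \<le> s}"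
      using x by (simp add: A_def)
  qed (auto simp: A_def intro: order_trans[rotated])
  ultimately have lim: "(\<lambda>n. measure M (A n)) \<longlonglongrightarrow> measure M {s \<in> space M. q \<le> s}"
    using A_sets by (metis finite_Lim_measure_decseq image_subsetI)
  have "c \<le> measure M (A n)" for n
    unfolding A_def by (rule below) simp
  then show ?thesis
    by (intro LIMSEQ_le_const[OF lim]) auto
qed

lemma measure_upper_set_type_distribution:
  assumes P: "P \<in> space (prob_algebra (type_space sl su))"
  shows "r \<le> sl \<Longrightarrow> measure P {s \<in> space P. r \<le> s} = 1"
    and "su < r \<Longrightarrow> measure P {s \<in> space P. r \<le> s} = 0"
proof -
  interpret prob_space P
    using type_distributionD[OF P] by simp
  have space: "space P = {sl..su}"
    using type_distributionD[OF P] by simp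
  show "prob {s \<in> space P. r \<le> s} = 1" if "r \<le> sl"
  proof -
    have "{s \<in> space P. r \<le> s} = space P"
      using that by (auto simp: space)
    then show ?thesis
      by (simp only: prob_space)
  qed
  show "prob {s \<in> space P. r \<le> s} = 0" if "su < r"
  proof -
    have "{s \<in> space P. r \<le> s} = {}"
      using that by (auto simp: space)
    then show ?thesis
      by (simp only:) simp
  qed
qed

lemma upper_median_iff:
  assumes P: "P \<in> space (prob_algebra (type_space sl su))"
  shows "1/2 \<le> measure P {s \<in> space P. r \<le> s} \<longleftrightarrow> r \<le> upper_median P"
proof -
  interpret prob_space P
    using type_distributionD[OF P] by simp
  have sets: "\<And>r. {s \<in> space P. r \<le> s} \<in> events"
    using type_distributionD[OF P] by (auto simp: sets_type_space_iff)
  define R where "R = {r. 1/2 \<le> prob {s \<in> space P. r \<le> s}}"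
  have down_closed: "r \<in> R" if "r' \<in> R" "r \<le> r'" for r r'
  proof -
    have "prob {s \<in> space P. r' \<le> s} \<le> prob {s \<in> space P. r \<le> s}"
      using \<open>r \<le> r'\<close> sets by (intro finite_measure_mono) auto
    then show ?thesis
      using \<open>r' \<in> R\<close> by (simp add: R_def)
  qed
  have "sl \<in> R"
    using measure_upper_set_type_distribution(1)[OF P, of sl] by (simp add: R_def)
  moreover have "r \<le> su" if "r \<in> R" for r
    by (rule ccontr) (use that measure_upper_set_type_distribution(2)[OF P, of r] in \<open>simp add: R_def\<close>)
  ultimately have R_ne: "R \<noteq> {}" and R_bdd: "bdd_above R"
    by (auto simp: bdd_above_def)
  have "1/2 \<le> prob {s \<in> space P. Sup R \<le> s}"
  proof (rule measure_upper_set_ge_limit[OF prob_space.finite_measure[OF type_distributionD(1)[OF P]] sets])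
    fix r assume "r < Sup R"
    then obtain r' where "r' \<in> R" "r < r'"
      using less_cSup_iff[OF R_ne R_bdd] by blast
    then show "1/2 \<le> prob {s \<in> space P. r \<le> s}"
      using down_closed[of r' r] by (simp add: R_def)
  qed
  then have "r \<in> R \<longleftrightarrow> r \<le> Sup R"
    using down_closed[of "Sup R" r] cSup_upper[OF _ R_bdd] by (auto simp: R_def)
  then show ?thesis
    by (simp add: R_def upper_median_def)
qed

lemma upper_median_in_type_space:
  assumes P: "P \<in> space (prob_algebra (type_space sl su))"
  shows "upper_median P \<in> {sl..su}"
proof -
  have "sl \<le> upper_median P"
    using upper_median_iff[OF P, of sl] measure_upper_set_type_distribution(1)[OF P, of sl] by simp
  moreover have "upper_median P \<le> su"
  proof (rule ccontr)
    assume "\<not> upper_median P \<le> su"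
    then show False
      using upper_median_iff[OF P, of "upper_median P"]
        measure_upper_set_type_distribution(2)[OF P, of "upper_median P"] by simp
  qed
  ultimately show ?thesis
    by simp
qed

lemma borel_measurable_upper_median [measurable]:
  "upper_median \<in> borel_measurable (prob_algebra (type_space sl su))"
proof (rule borel_measurableI_ge)
  fix r
  have "{P \<in> space (prob_algebra (type_space sl su)). r \<le> upper_median P} =
      {P \<in> space (prob_algebra (type_space sl su)). 1/2 \<le> measure P {s \<in> {sl..su}. r \<le> s}}"
    by (intro Collect_cong conj_cong refl) (metis upper_median_iff type_distributionD(3))
  also have "\<dots> \<in> sets (prob_algebra (type_space sl su))"
  proof -
    have "(\<lambda>P. measure P {s \<in> {sl..su}. r \<le> s}) \<in> borel_measurable (prob_algebra (type_space sl su))"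
      by (rule measurable_measure_prob_algebra) (auto simp: sets_type_space_iff)
    then show ?thesis
      unfolding borel_measurable_iff_ge by blast
  qed
  finally show "{P \<in> space (prob_algebra (type_space sl su)). r \<le> upper_median P}
      \<in> sets (prob_algebra (type_space sl su))" .
qed

lemma wins_iff_le_upper_median:
  assumes v: "\<forall>s r. v s r = (if r \<le> s then 1 else 0)"
    and P: "P \<in> space (prob_algebra (type_space sl su))"
  shows "wins v P r \<longleftrightarrow> r \<le> upper_median P"
proof -
  interpret prob_space P using type_distributionD[OF P] by simp
  have "(\<integral>s. v s r \<partial>P) = (\<integral>s. indicator {s \<in> space P. r \<le> s} s \<partial>P)"
    using v by (intro Bochner_Integration.integral_cong) (auto simp: indicator_def)
  also have "\<dots> = prob {s \<in> space P. r \<le> s}"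
    using type_distributionD[OF P] by (simp add: Int_absorb2 subset_iff)
  finally show ?thesis
    unfolding wins_def using upper_median_iff[OF P] by simp
qed

lemma (in prob_space) nn_integral_eq_iff_AE_eq:
  fixes f g :: "'a \<Rightarrow> real"
  assumes f: "f \<in> borel_measurable M" and g: "g \<in> borel_measurable M"
    and bounds: "\<And>x. x \<in> space M \<Longrightarrow> 0 \<le> f x \<and> f x \<le> g x \<and> g x \<le> B"
  shows "(\<integral>\<^sup>+x. ennreal (f x) \<partial>M) = (\<integral>\<^sup>+x. ennreal (g x) \<partial>M) \<longleftrightarrow> (AE x in M. f x = g x)"
proof -
  have nonneg: "0 \<le> f x" "0 \<le> g x" and abs: "\<bar>f x\<bar> \<le> B" "\<bar>g x\<bar> \<le> B" if "x \<in> space M" for x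
    using bounds[OF that] by auto
  have integrable: "integrable M f" "integrable M g"
    using f g abs by (auto intro!: integrable_const_bound[where B=B])
  have "(\<integral>\<^sup>+x. ennreal (f x) \<partial>M) = ennreal (\<integral>x. f x \<partial>M)"
    "(\<integral>\<^sup>+x. ennreal (g x) \<partial>M) = ennreal (\<integral>x. g x \<partial>M)"
    using integrable nonneg by (auto intro!: nn_integral_eq_integral)
  moreover have "0 \<le> (\<integral>x. f x \<partial>M)" "0 \<le> (\<integral>x. g x \<partial>M)"
    using nonneg by (simp_all add: integral_nonneg)
  ultimately have "(\<integral>\<^sup>+x. ennreal (f x) \<partial>M) = (\<integral>\<^sup>+x. ennreal (g x) \<partial>M) \<longleftrightarrow>
      (\<integral>x. f x \<partial>M) = (\<integral>x. g x \<partial>M)"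
    by (simp add: ennreal_inj)
  also have "\<dots> \<longleftrightarrow> (AE x in M. f x = g x)"
    using integral_eq_mono_AE_eq_AE[OF integrable] bounds integral_cong_AE[OF f g] by auto
  finally show ?thesis .
qed

lemma districting_planD:
  assumes "districting_plan sl su F H"
  shows "prob_space H" and "sets H = sets (prob_algebra (type_space sl su))"
    and "space H = space (prob_algebra (type_space sl su))"
    and "\<And>S. S \<in> sets (type_space sl su) \<Longrightarrow> (\<integral>P. measure P S \<partial>H) = measure F S"
  using assms unfolding districting_plan_def by (auto dest: sets_eq_imp_space_eq)

lemma emeasure_districting_plan:
  assumes H: "districting_plan sl su F H"
    and F: "prob_space F" "sets F = sets (type_space sl su)"
    and S: "S \<in> sets (type_space sl su)"
  shows "(\<integral>\<^sup>+P. emeasure P S \<partial>H) = emeasure F S"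
proof -
  interpret H: prob_space H using districting_planD(1)[OF H] .
  have measurable_measure: "(\<lambda>P. measure P S) \<in> borel_measurable H"
    using S by (simp add: measurable_cong_sets[OF districting_planD(2)[OF H] refl])
  have "(\<integral>\<^sup>+P. emeasure P S \<partial>H) = (\<integral>\<^sup>+P. ennreal (measure P S) \<partial>H)"
    using S by (intro nn_integral_cong) (simp add: districting_planD(3)[OF H] space_prob_algebra
        prob_space.finite_measure finite_measure.emeasure_eq_measure)
  also have "\<dots> = ennreal (\<integral>P. measure P S \<partial>H)"
  proof (intro nn_integral_eq_integral AE_I2 measure_nonneg H.integrable_const_bound[where B=1])
    show "norm (measure P S) \<le> 1" if "P \<in> space H" for P
      using that by (auto simp: districting_planD(3)[OF H] space_prob_algebra prob_space.prob_le_1)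
  qed (rule measurable_measure)
  also have "\<dots> = emeasure F S"
    using districting_planD(4)[OF H S] F(1)
    by (simp add: prob_space.finite_measure finite_measure.emeasure_eq_measure)
  finally show ?thesis .
qed

lemma nn_integral_districting_plan:
  assumes H: "districting_plan sl su F H"
    and F: "prob_space F" "sets F = sets (type_space sl su)"
    and h: "h \<in> borel_measurable (type_space sl su)"
  shows "(\<integral>\<^sup>+P. (\<integral>\<^sup>+s. h s \<partial>P) \<partial>H) = (\<integral>\<^sup>+s. h s \<partial>F)"
proof -
  let ?M = "type_space sl su"
  have id: "(\<lambda>P. P) \<in> H \<rightarrow>\<^sub>M subprob_algebra ?M"
    by (intro measurable_prob_algebraD measurable_ident_sets districting_planD(2)[OF H])
  define H' where "H' = distr H (subprob_algebra ?M) (\<lambda>P. P)"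
  have sets_H': "sets H' = sets (subprob_algebra ?M)"
    by (simp add: H'_def)
  have "join H' = F"
  proof (rule measure_eqI)
    show "sets (join H') = sets F"
      using sets_H' F(2) by simp
    fix S assume "S \<in> sets (join H')"
    then have S: "S \<in> sets ?M"
      using sets_H' by simp
    show "emeasure (join H') S = emeasure F S"
      using emeasure_join[OF sets_H' S] emeasure_districting_plan[OF H F S] S
      by (simp add: H'_def nn_integral_distr[OF id])
  qed
  then have "(\<integral>\<^sup>+s. h s \<partial>F) = (\<integral>\<^sup>+P. (\<integral>\<^sup>+s. h s \<partial>P) \<partial>H')"
    using nn_integral_join[OF h sets_H'] by simp
  also have "\<dots> = (\<integral>\<^sup>+P. (\<integral>\<^sup>+s. h s \<partial>P) \<partial>H)"
    unfolding H'_def by (rule nn_integral_distr[OF id]) (simp add: nn_integral_measurable_subprob_algebra h)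
  finally show ?thesis ..
qed

lemma AE_districting_plan_null:
  assumes H: "districting_plan sl su F H"
    and F: "prob_space F" "sets F = sets (type_space sl su)"
    and S: "S \<in> sets (type_space sl su)" and null: "measure F S = 0"
  shows "AE P in H. measure P S = 0"
proof -
  have "(\<integral>\<^sup>+P. emeasure P S \<partial>H) = 0"
    using emeasure_districting_plan[OF H F S] null F(1)
    by (simp add: prob_space.finite_measure finite_measure.emeasure_eq_measure)
  moreover have "(\<lambda>P. emeasure P S) \<in> borel_measurable H"
    using S by (simp add: measurable_cong_sets[OF districting_planD(2)[OF H] refl] prob_algebra_def
        measurable_restrict_space1)
  ultimately have "AE P in H. emeasure P S = 0"
    by (simp add: nn_integral_0_iff_AE)
  then show ?thesis
    by (rule AE_mp) (auto simp: measure_def)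
qed

definition two_point_district :: "'a measure \<Rightarrow> 'a \<Rightarrow> 'a \<Rightarrow> 'a measure" where
  "two_point_district M a b = distr (measure_pmf (bernoulli_pmf (1/2))) M (\<lambda>c. if c then a else b)"

lemma
  assumes "a \<in> space M" "b \<in> space M"
  shows two_point_district_in_prob_algebra: "two_point_district M a b \<in> space (prob_algebra M)"
    and measure_two_point_district:
      "A \<in> sets M \<Longrightarrow> measure (two_point_district M a b) A = (indicator A a + indicator A b) / 2"
proof -
  have measurable: "(\<lambda>c. if c then a else b) \<in> measure_pmf (bernoulli_pmf (1/2)) \<rightarrow>\<^sub>M M"
    using assms by simp
  show "two_point_district M a b \<in> space (prob_algebra M)"
    unfolding two_point_district_def space_prob_algebra
    using measure_pmf.prob_space_distr[OF measurable] by simp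
  assume A: "A \<in> sets M"
  have "{c. (if c then a else b) \<in> A} = (if a \<in> A then {True} else {}) \<union> (if b \<in> A then {False} else {})"
    by auto
  then show "measure (two_point_district M a b) A = (indicator A a + indicator A b) / 2"
    unfolding two_point_district_def using A
    by (simp add: measure_distr[OF measurable] vimage_def measure_measure_pmf_finite split: split_indicator)
qed

lemma measurable_two_point_district:
  "(\<lambda>(a, b). two_point_district M a b) \<in> M \<Otimes>\<^sub>M M \<rightarrow>\<^sub>M prob_algebra M"
proof (rule measurable_prob_algebraI)
  show "prob_space (case x of (a, b) \<Rightarrow> two_point_district M a b)" if "x \<in> space (M \<Otimes>\<^sub>M M)" for x
    using that two_point_district_in_prob_algebra[of "fst x" M "snd x"]
    by (auto simp: space_pair_measure space_prob_algebra case_prod_beta)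
  let ?B = "measure_pmf (bernoulli_pmf (1/2))"
  have "(\<lambda>(z, c). if c then fst z else snd z) \<in> (M \<Otimes>\<^sub>M M) \<Otimes>\<^sub>M ?B \<rightarrow>\<^sub>M M"
    by measurable
  moreover have "(\<lambda>_. ?B) \<in> M \<Otimes>\<^sub>M M \<rightarrow>\<^sub>M subprob_algebra ?B"
    by (rule measurable_const) (simp add: space_subprob_algebra subprob_space_measure_pmf)
  ultimately have "(\<lambda>z. distr ?B M (\<lambda>c. if c then fst z else snd z)) \<in> M \<Otimes>\<^sub>M M \<rightarrow>\<^sub>M subprob_algebra M"
    by (rule measurable_distr2)
  then show "(\<lambda>(a, b). two_point_district M a b) \<in> M \<Otimes>\<^sub>M M \<rightarrow>\<^sub>M subprob_algebra M"
    by (simp add: two_point_district_def case_prod_beta')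
qed

lemma integral_measure_two_point_district:
  fixes M1 M2 :: "'a measure"
  assumes M1: "prob_space M1" and M2: "prob_space M2"
    and sets: "sets M1 = sets M" "sets M2 = sets M" and S: "S \<in> sets M"
  shows "(\<integral>z. measure (two_point_district M (fst z) (snd z)) S \<partial>(M1 \<Otimes>\<^sub>M M2)) =
    (measure M1 S + measure M2 S) / 2"
proof -
  interpret M1: prob_space M1
    by (rule M1)
  interpret M2: prob_space M2
    by (rule M2)
  interpret pair_prob_space M1 M2 ..
  have space: "space M1 = space M" "space M2 = space M"
    using sets by (auto dest: sets_eq_imp_space_eq)
  have S_space: "S \<subseteq> space M"
    using S by (rule sets.sets_into_space)
  then have "(\<integral>z. measure (two_point_district M (fst z) (snd z)) S \<partial>(M1 \<Otimes>\<^sub>M M2)) =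
      (\<integral>z. (indicator (S \<times> space M2) z + indicator (space M1 \<times> S) z) / 2 \<partial>(M1 \<Otimes>\<^sub>M M2))"
    using S by (intro Bochner_Integration.integral_cong)
      (auto simp: space_pair_measure space measure_two_point_district indicator_def)
  also have "\<dots> = (measure (M1 \<Otimes>\<^sub>M M2) (S \<times> space M2) + measure (M1 \<Otimes>\<^sub>M M2) (space M1 \<times> S)) / 2"
    using S sets by (subst integral_divide_zero, subst Bochner_Integration.integral_add)
      (auto simp: less_top[symmetric] space_pair_measure space Times_Int_Times
        Int_absorb1[OF S_space] Int_absorb2[OF S_space])
  also have "\<dots> = (measure M1 S + measure M2 S) / 2"
  proof -
    have "S \<in> sets M1" "S \<in> sets M2"
      using S sets by simp_all
    then show ?thesis
      using M2.emeasure_pair_measure_Times[OF \<open>S \<in> sets M1\<close> sets.top[of M2]]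
        M2.emeasure_pair_measure_Times[OF sets.top[of M1] \<open>S \<in> sets M2\<close>]
        M1.emeasure_space_1 M2.emeasure_space_1
      by (simp add: measure_def)
  qed
  finally show ?thesis .
qed

lemma (in prob_space) uniform_measure_half:
  assumes A: "A \<in> events" and half: "prob A = 1/2"
  shows "prob_space (uniform_measure M A)"
    and "B \<in> events \<Longrightarrow> measure (uniform_measure M A) B = 2 * prob (A \<inter> B)"
proof -
  have emeasure_A: "emeasure M A = ennreal (1/2)"
    by (simp only: emeasure_eq_measure half)
  then show "prob_space (uniform_measure M A)"
    by (intro prob_space_uniform_measure) auto
  show "measure (uniform_measure M A) B = 2 * prob (A \<inter> B)" if "B \<in> events"
    using that emeasure_A by (simp add: half)
qed

lemma (in pair_sigma_finite) AE_pair_measure_Times: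
  assumes A: "A \<in> sets M1" and B: "B \<in> sets M2"
    and AE_A: "AE x in M1. x \<in> A" and AE_B: "AE y in M2. y \<in> B"
  shows "AE z in M1 \<Otimes>\<^sub>M M2. fst z \<in> A \<and> snd z \<in> B"
proof (rule AE_pair_measure)
  have "{z \<in> space (M1 \<Otimes>\<^sub>M M2). fst z \<in> A \<and> snd z \<in> B} = A \<times> B"
    using sets.sets_into_space[OF A] sets.sets_into_space[OF B] by (auto simp: space_pair_measure)
  then show "{z \<in> space (M1 \<Otimes>\<^sub>M M2). fst z \<in> A \<and> snd z \<in> B} \<in> sets (M1 \<Otimes>\<^sub>M M2)"
    using A B by simp
  show "AE x in M1. AE y in M2. fst (x, y) \<in> A \<and> snd (x, y) \<in> B"
    using AE_A
  proof eventually_elim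
    case (elim x)
    show ?case
      using AE_B by eventually_elim (use elim in simp)
  qed
qed

definition pairing_plan :: "real \<Rightarrow> real \<Rightarrow> real measure \<Rightarrow> real set \<Rightarrow> real measure measure" where
  "pairing_plan sl su F Lo =
     distr (uniform_measure F Lo \<Otimes>\<^sub>M uniform_measure F ({sl..su} - Lo)) (prob_algebra (type_space sl su))
       (\<lambda>(a, b). two_point_district (type_space sl su) a b)"

lemma pairing_halves:
  assumes F: "prob_space F" "sets F = sets (type_space sl su)"
    and Lo: "Lo \<in> sets (type_space sl su)" and F_Lo: "measure F Lo = 1/2"
  defines "Hi \<equiv> {sl..su} - Lo"
  shows "prob_space (uniform_measure F Lo)" and "prob_space (uniform_measure F Hi)"
    and "S \<in> sets (type_space sl su) \<Longrightarrow>
      measure (uniform_measure F Lo) S + measure (uniform_measure F Hi) S = 2 * measure F S"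
proof -
  interpret F: prob_space F
    by (rule F(1))
  have Lo_F: "Lo \<in> F.events" and Hi_F: "Hi \<in> F.events"
    using Lo F(2) by (auto simp: Hi_def sets_type_space_iff)
  have F_Hi: "measure F Hi = 1/2"
    using F.prob_compl[OF Lo_F] F_Lo by (simp add: Hi_def sets_eq_imp_space_eq[OF F(2)])
  show "prob_space (uniform_measure F Lo)" "prob_space (uniform_measure F Hi)"
    by (rule F.uniform_measure_half(1)[OF Lo_F F_Lo], rule F.uniform_measure_half(1)[OF Hi_F F_Hi])
  assume S: "S \<in> sets (type_space sl su)"
  have "Hi \<inter> S = S - Lo"
    using S by (auto simp: Hi_def sets_type_space_iff)
  then have "measure F (Lo \<inter> S) + measure F (Hi \<inter> S) = measure F S"
    using S Lo F(2) by (simp add: F.finite_measure_Diff' Int_commute)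
  moreover have "measure (uniform_measure F Lo) S = 2 * measure F (Lo \<inter> S)"
    "measure (uniform_measure F Hi) S = 2 * measure F (Hi \<inter> S)"
    using S F(2) by (simp_all add: F.uniform_measure_half(2)[OF Lo_F F_Lo] F.uniform_measure_half(2)[OF Hi_F F_Hi])
  ultimately show "measure (uniform_measure F Lo) S + measure (uniform_measure F Hi) S = 2 * measure F S"
    by linarith
qed

lemma measurable_two_point_district_uniform_measure:
  assumes "sets F = sets M"
  shows "(\<lambda>(a, b). two_point_district M a b) \<in> uniform_measure F A \<Otimes>\<^sub>M uniform_measure F B \<rightarrow>\<^sub>M prob_algebra M"
proof -
  have sets: "sets (uniform_measure F A \<Otimes>\<^sub>M uniform_measure F B) = sets (M \<Otimes>\<^sub>M M)"
    using assms by (intro sets_pair_measure_cong) simp_all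
  show ?thesis
    unfolding measurable_cong_sets[OF sets refl] by (rule measurable_two_point_district)
qed

lemma districting_plan_pairing_plan:
  assumes F: "prob_space F" "sets F = sets (type_space sl su)"
    and Lo: "Lo \<in> sets (type_space sl su)" and F_Lo: "measure F Lo = 1/2"
  shows "districting_plan sl su F (pairing_plan sl su F Lo)"
proof -
  let ?M = "type_space sl su" and ?L = "uniform_measure F Lo" and ?U = "uniform_measure F ({sl..su} - Lo)"
  let ?K = "\<lambda>(a, b). two_point_district ?M a b"
  have L: "prob_space ?L" and U: "prob_space ?U"
    using pairing_halves(1,2)[OF assms] by simp_all
  note K = measurable_two_point_district_uniform_measure[OF F(2)]
  show ?thesis
    unfolding districting_plan_def pairing_plan_def
  proof (intro conjI ballI)
    show "prob_space (distr (?L \<Otimes>\<^sub>M ?U) (prob_algebra ?M) ?K)"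
      by (rule prob_space.prob_space_distr[OF prob_space_pair[OF L U] K])
    fix S assume S: "S \<in> sets ?M"
    have "(\<integral>P. measure P S \<partial>distr (?L \<Otimes>\<^sub>M ?U) (prob_algebra ?M) ?K)
        = (\<integral>z. measure (two_point_district ?M (fst z) (snd z)) S \<partial>?L \<Otimes>\<^sub>M ?U)"
      using S by (subst integral_distr[OF K]) (simp_all add: case_prod_beta)
    also have "\<dots> = (measure ?L S + measure ?U S) / 2"
      using S F(2) by (intro integral_measure_two_point_district[OF L U]) simp_all
    also have "\<dots> = measure F S"
      using pairing_halves(3)[OF assms S] by simp
    finally show "(\<integral>P. measure P S \<partial>distr (?L \<Otimes>\<^sub>M ?U) (prob_algebra ?M) ?K) = measure F S" .
  qed simp
qed

lemma AE_pairing_plan: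
  assumes F: "prob_space F" "sets F = sets (type_space sl su)"
    and Lo: "Lo \<in> sets (type_space sl su)" and F_Lo: "measure F Lo = 1/2"
    and Q_sets: "{P \<in> space (prob_algebra (type_space sl su)). Q P} \<in> sets (prob_algebra (type_space sl su))"
    and Q: "\<And>a b. a \<in> Lo \<Longrightarrow> b \<in> {sl..su} - Lo \<Longrightarrow> Q (two_point_district (type_space sl su) a b)"
  shows "AE P in pairing_plan sl su F Lo. Q P"
proof -
  let ?L = "uniform_measure F Lo" and ?U = "uniform_measure F ({sl..su} - Lo)"
  interpret L: prob_space ?L
    using pairing_halves(1)[OF F Lo F_Lo] .
  interpret U: prob_space ?U
    using pairing_halves(2)[OF F Lo F_Lo] by simp
  interpret D: pair_prob_space ?L ?U ..
  have "AE a in ?L. a \<in> Lo" "AE b in ?U. b \<in> {sl..su} - Lo"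
    using Lo F(2) by (auto simp: sets_type_space_iff intro!: AE_uniform_measureI)
  then have "AE z in ?L \<Otimes>\<^sub>M ?U. fst z \<in> Lo \<and> snd z \<in> {sl..su} - Lo"
    using Lo F(2) by (intro D.AE_pair_measure_Times) (auto simp: sets_type_space_iff)
  then have "AE z in ?L \<Otimes>\<^sub>M ?U. Q (two_point_district (type_space sl su) (fst z) (snd z))"
    by eventually_elim (auto intro: Q)
  then show ?thesis
    unfolding pairing_plan_def AE_distr_iff[OF measurable_two_point_district_uniform_measure[OF F(2)] Q_sets]
    by (simp add: case_prod_beta)
qed

lemma measure_density_restrict_lborel_singleton:
  fixes f :: "real \<Rightarrow> real"
  assumes f: "f \<in> borel_measurable borel" and A: "A \<in> sets borel"
  shows "measure (density (restrict_space lborel A) (\<lambda>s. ennreal (f s))) {x} = 0"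
proof (cases "{x} \<in> sets (restrict_space lborel A)")
  case True
  have "AE s in restrict_space lborel A. s \<noteq> x"
    using A AE_lborel_singleton[of x] by (subst AE_restrict_space_iff) auto
  then have "AE s in density (restrict_space lborel A) (\<lambda>s. ennreal (f s)). s \<noteq> x"
    using f by (subst AE_density) (auto intro: measurable_restrict_space1)
  then show ?thesis
    using True by (subst measure_eq_AE[where B="{}"]) auto
qed (simp add: measure_notin_sets)

lemma strict_mono_cdf_density_lborel:
  fixes g :: "real \<Rightarrow> real"
  assumes g: "g \<in> borel_measurable borel" and g_pos: "\<forall>r. 0 < g r"
    and prob: "prob_space (density lborel (\<lambda>r. ennreal (g r)))"
  shows "strict_mono (cdf (density lborel (\<lambda>r. ennreal (g r))))"
proof (rule strict_monoI)
  let ?G = "density lborel (\<lambda>r. ennreal (g r))"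
  interpret G: real_distribution ?G
    using prob by (simp add: real_distribution_def real_distribution_axioms_def)
  fix x y :: real assume "x < y"
  have "{x<..y} \<notin> null_sets ?G"
  proof
    assume "{x<..y} \<in> null_sets ?G"
    then have "AE r in lborel. r \<in> {x<..y} \<longrightarrow> ennreal (g r) = 0"
      using g by (simp add: null_sets_density_iff)
    moreover have "ennreal (g r) \<noteq> 0" for r
      using g_pos by (simp add: ennreal_eq_0_iff not_le)
    ultimately have "AE r in lborel. r \<notin> {x<..y}"
      by auto
    then have "{x<..y} \<in> null_sets lborel"
      by (subst AE_iff_null_sets) auto
    then show False
      using \<open>x < y\<close> by (simp add: null_sets_def)
  qed
  then have "0 < G.prob {x<..y}"
    by (simp add: null_sets_def G.emeasure_eq_measure zero_less_measure_iff)
  then show "cdf ?G x < cdf ?G y"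
    using G.cdf_diff_eq[OF \<open>x < y\<close>] by simp
qed

locale median_districting =
  fixes sl su sm :: real and F G :: "real measure" and v :: "real \<Rightarrow> real \<Rightarrow> real"
  assumes prob_space_F: "prob_space F"
    and sets_F: "sets F = sets (type_space sl su)"
    and median_in_type_space: "sm \<in> {sl..su}"
    and F_median: "measure F {s \<in> {sl..su}. s \<le> sm} = 1/2"
    and F_median_null: "measure F {sm} = 0"
    and real_distribution_G: "real_distribution G"
    and strict_mono_cdf_G: "strict_mono (cdf G)"
    and v_eq: "\<forall>s r. v s r = (if r \<le> s then 1 else 0)"
begin

sublocale G: real_distribution G
  by (rule real_distribution_G)

lemma F_below_median: "measure F {s \<in> {sl..su}. s < sm} = 1/2"
proof -
  interpret F: prob_space F
    by (rule prob_space_F)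
  have "AE s in F. s \<notin> {sm}"
    using F_median_null median_in_type_space
    by (intro AE_not_in) (simp add: null_sets_def F.emeasure_eq_measure sets_F sets_type_space_iff)
  then have "measure F {s \<in> {sl..su}. s < sm} = measure F {s \<in> {sl..su}. s \<le> sm}"
    by (intro measure_eq_AE) (auto simp: sets_F sets_type_space_iff)
  then show ?thesis
    using F_median by simp
qed

lemma borel_measurable_cdf_G [measurable]: "cdf G \<in> borel_measurable borel"
  by (intro borel_measurable_mono monoI G.cdf_nondecreasing)

text \<open>A district pairing type s \<ge> sm with an equal mass of below-median voters wins with
  probability cdf G s, the average of the two weights.\<close>
definition seat_weight :: "real \<Rightarrow> real" where
  "seat_weight s = (if s < sm then cdf G sm else 2 * cdf G s - cdf G sm)"

definition step_weight :: "real \<Rightarrow> real \<Rightarrow> real" where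
  "step_weight q s = (if q \<le> s then 2 * cdf G q - cdf G sm else cdf G sm)"

definition matched_district :: "real measure \<Rightarrow> real \<Rightarrow> bool" where
  "matched_district P t \<longleftrightarrow>
     sm \<le> t \<and> measure P {t} = 1/2 \<and> measure P {s \<in> {sl..su}. s < sm} = 1/2"

lemma borel_measurable_seat_weight [measurable]: "seat_weight \<in> borel_measurable borel"
  unfolding seat_weight_def by measurable

lemma borel_measurable_step_weight [measurable]: "step_weight q \<in> borel_measurable borel"
  unfolding step_weight_def by measurable

lemma seat_weight_bounds: "cdf G sm \<le> seat_weight s" "seat_weight s \<le> 2"
  using G.cdf_nondecreasing[of sm s] G.cdf_bounded_prob[of s] G.cdf_bounded_prob[of sm] G.cdf_nonneg[of sm]
  by (auto simp: seat_weight_def)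

lemma seat_weight_nonneg: "0 \<le> seat_weight s"
  using seat_weight_bounds(1) G.cdf_nonneg order_trans by blast

lemma abs_step_weight_le: "\<bar>step_weight q s\<bar> \<le> 2"
  using G.cdf_bounded_prob[of q] G.cdf_bounded_prob[of sm] G.cdf_nonneg[of q] G.cdf_nonneg[of sm]
  by (auto simp: step_weight_def)

lemma step_weight_le_seat_weight:
  assumes "sm \<le> q" shows "step_weight q s \<le> seat_weight s"
  using assms G.cdf_nondecreasing[of q s] G.cdf_nondecreasing[of sm s]
  by (auto simp: step_weight_def seat_weight_def)

lemma step_weight_eq_seat_weight_iff:
  assumes "sm \<le> q" shows "step_weight q s = seat_weight s \<longleftrightarrow> s \<le> sm \<or> s = q"
  using assms strict_mono_eq[OF strict_mono_cdf_G]
  by (auto simp: step_weight_def seat_weight_def split: if_splits)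

lemma borel_measurable_integral_seat_weight [measurable]:
  "(\<lambda>P. \<integral>s. seat_weight s \<partial>P) \<in> borel_measurable (prob_algebra (type_space sl su))"
  unfolding prob_algebra_def
  by (intro measurable_restrict_space1 integral_measurable_subprob_algebra measurable_type_space)
     (rule borel_measurable_seat_weight)

context
  fixes P assumes P: "P \<in> space (prob_algebra (type_space sl su))"
begin

interpretation prob_space P
  using type_distributionD(1)[OF P] .

lemma space_P: "space P = {sl..su}"
  using type_distributionD(3)[OF P] .

lemma sets_P: "A \<in> events \<longleftrightarrow> A \<subseteq> {sl..su} \<and> A \<in> sets borel"
  using type_distributionD(2)[OF P] by (simp add: sets_type_space_iff)

lemma integrable_bounded:
  fixes f :: "real \<Rightarrow> real" and B :: real
  assumes "f \<in> borel_measurable borel" and "\<And>s. \<bar>f s\<bar> \<le> B"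
  shows "integrable P f"
proof (rule integrable_const_bound[where B=B])
  show "f \<in> borel_measurable P"
    using measurable_type_space[OF assms(1)]
    by (simp add: measurable_cong_sets[OF type_distributionD(2)[OF P] refl])
qed (use assms(2) in simp)

lemma integrable_seat_weight: "integrable P seat_weight"
  using seat_weight_bounds seat_weight_nonneg
  by (intro integrable_bounded[where B=2] borel_measurable_seat_weight) auto

lemma integrable_step_weight: "integrable P (step_weight q)"
  by (intro integrable_bounded[where B=2] abs_step_weight_le borel_measurable_step_weight)

lemma integral_step_weight:
  "expectation (step_weight q) = cdf G sm + 2 * (cdf G q - cdf G sm) * prob {s \<in> space P. q \<le> s}"
proof -
  have "expectation (step_weight q) =
      expectation (\<lambda>s. cdf G sm + 2 * (cdf G q - cdf G sm) * indicator {s \<in> space P. q \<le> s} s)"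
    by (intro Bochner_Integration.integral_cong) (auto simp: step_weight_def indicator_def)
  also have "\<dots> = cdf G sm + 2 * (cdf G q - cdf G sm) * prob {s \<in> space P. q \<le> s}"
    by (subst Bochner_Integration.integral_add)
       (auto simp: sets_P space_P prob_space[unfolded space_P] less_top[symmetric] Int_absorb2 subset_iff)
  finally show ?thesis .
qed

lemma integral_seat_weight_bounds: "cdf G sm \<le> expectation seat_weight" "expectation seat_weight \<le> 2"
  using integral_mono[OF _ integrable_seat_weight seat_weight_bounds(1)]
    integral_mono[OF integrable_seat_weight _ seat_weight_bounds(2)] prob_space
  by simp_all

lemma cdf_le_integral_step_weight:
  assumes "sm \<le> q" and "1/2 \<le> prob {s \<in> space P. q \<le> s}"
  shows "cdf G q \<le> expectation (step_weight q)"
proof -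
  have "(cdf G q - cdf G sm) * 1 \<le> (cdf G q - cdf G sm) * (2 * prob {s \<in> space P. q \<le> s})"
    using assms G.cdf_nondecreasing[OF assms(1)] by (intro mult_left_mono) auto
  then show ?thesis
    by (simp add: integral_step_weight algebra_simps)
qed

lemma cdf_upper_median_le_integral_seat_weight:
  "cdf G (upper_median P) \<le> expectation seat_weight"
proof (cases "sm \<le> upper_median P")
  case True
  have "cdf G (upper_median P) \<le> expectation (step_weight (upper_median P))"
    using True upper_median_iff[OF P] by (intro cdf_le_integral_step_weight) auto
  also have "\<dots> \<le> expectation seat_weight"
    using True by (intro integral_mono integrable_step_weight integrable_seat_weight step_weight_le_seat_weight)
  finally show ?thesis .
next
  case False
  then show ?thesis
    using G.cdf_nondecreasing[of "upper_median P" sm] integral_seat_weight_bounds(1) by simp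
qed

lemma AE_matched_district:
  assumes "matched_district P t"
  shows "AE s in P. s < sm \<or> s = t"
proof -
  have "t \<in> {sl..su}"
    using assms measure_notin_sets[of "{t}" P] by (auto simp: matched_district_def sets_P)
  then have "prob ({s \<in> {sl..su}. s < sm} \<union> {t}) = 1"
    using assms by (subst finite_measure_Union) (auto simp: matched_district_def sets_P)
  then show ?thesis
    by (rule AE_mp[OF AE_prob_1]) auto
qed

lemma prob_ge_matched_district:
  assumes "matched_district P t" and "sm \<le> r"
  shows "prob {s \<in> space P. r \<le> s} = (if r \<le> t then 1/2 else 0)"
proof -
  have "prob {s \<in> space P. r \<le> s} = prob (if r \<le> t then {t} else {})"
  proof (rule measure_eq_AE)
    show "AE s in P. s \<in> {s \<in> space P. r \<le> s} \<longleftrightarrow> s \<in> (if r \<le> t then {t} else {})"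
      using AE_matched_district[OF assms(1)] AE_space
      by eventually_elim (use assms(2) in auto)
    show "(if r \<le> t then {t} else {}) \<in> events"
      using assms(1) measure_notin_sets[of "{t}" P] by (auto simp: matched_district_def)
  qed (auto simp: sets_P space_P)
  then show ?thesis
    using assms(1) by (simp add: matched_district_def)
qed

lemma upper_median_matched_district:
  assumes "matched_district P t"
  shows "upper_median P = t"
proof (rule antisym)
  have "sm \<le> t" using assms by (simp add: matched_district_def)
  then show "t \<le> upper_median P"
    using upper_median_iff[OF P, of t] prob_ge_matched_district[OF assms, of t] by simp
  show "upper_median P \<le> t"
  proof (rule ccontr)
    assume "\<not> upper_median P \<le> t"
    then show False
      using upper_median_iff[OF P, of "upper_median P"] prob_ge_matched_district[OF assms, of "upper_median P"]
        \<open>sm \<le> t\<close> by simp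
  qed
qed

lemma integral_seat_weight_matched_district:
  assumes "matched_district P t"
  shows "expectation seat_weight = cdf G t"
proof -
  have "sm \<le> t" using assms by (simp add: matched_district_def)
  have "AE s in P. step_weight t s = seat_weight s"
    using AE_matched_district[OF assms]
    by eventually_elim (auto simp: step_weight_eq_seat_weight_iff[OF \<open>sm \<le> t\<close>])
  then have "expectation seat_weight = expectation (step_weight t)"
    by (intro integral_cong_AE borel_measurable_integrable integrable_seat_weight integrable_step_weight)
       auto
  then show ?thesis
    using prob_ge_matched_district[OF assms \<open>sm \<le> t\<close>] by (simp add: integral_step_weight field_simps)
qed

lemma step_weight_AE_eq_seat_weight_if_cdf_eq:
  assumes eq: "cdf G (upper_median P) = expectation seat_weight"
  shows "sm \<le> upper_median P"
    and "cdf G (upper_median P) = expectation (step_weight (upper_median P))"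
    and "AE s in P. step_weight (upper_median P) s = seat_weight s"
proof -
  let ?q = "upper_median P"
  show "sm \<le> ?q"
  proof (rule ccontr)
    assume "\<not> sm \<le> ?q"
    then have "cdf G ?q < cdf G sm"
      using strict_mono_less[OF strict_mono_cdf_G] by simp
    then show False
      using eq integral_seat_weight_bounds(1) by simp
  qed
  then have "cdf G ?q \<le> expectation (step_weight ?q)"
    using upper_median_iff[OF P] by (intro cdf_le_integral_step_weight) auto
  moreover have "expectation (step_weight ?q) \<le> expectation seat_weight"
    using \<open>sm \<le> ?q\<close>
    by (intro integral_mono integrable_step_weight integrable_seat_weight step_weight_le_seat_weight)
  ultimately show step_eq: "cdf G ?q = expectation (step_weight ?q)"
    using eq by simp
  show "AE s in P. step_weight ?q s = seat_weight s"
    using \<open>sm \<le> ?q\<close> eq step_eq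
    by (intro integral_eq_mono_AE_eq_AE integrable_step_weight integrable_seat_weight AE_I2)
       (auto simp: step_weight_le_seat_weight)
qed

lemma matched_district_if_cdf_eq:
  assumes null: "prob {sm} = 0" and eq: "cdf G (upper_median P) = expectation seat_weight"
  shows "matched_district P (upper_median P)"
proof -
  define q where "q = upper_median P"
  note squeeze = step_weight_AE_eq_seat_weight_if_cdf_eq[OF eq, folded q_def]
  have "AE s in P. s \<notin> {sm}"
    using null median_in_type_space by (intro AE_not_in) (simp add: null_sets_def emeasure_eq_measure sets_P)
  with squeeze(3) have concentrated: "AE s in P. s < sm \<or> s = q"
    by eventually_elim (auto simp: step_weight_eq_seat_weight_iff[OF squeeze(1)])
  have q_in: "q \<in> {sl..su}"
    using upper_median_in_type_space[OF P] by (simp add: q_def)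
  have ge_q: "prob {s \<in> space P. q \<le> s} = prob {q}"
    using concentrated AE_space q_in squeeze(1)
    by (intro measure_eq_AE) (auto simp: sets_P space_P)
  have "q \<noteq> sm"
    using upper_median_iff[OF P, of q] ge_q null by (auto simp: q_def)
  then have "cdf G sm < cdf G q"
    using squeeze(1) strict_mono_less[OF strict_mono_cdf_G] by simp
  moreover have "(cdf G q - cdf G sm) * (2 * prob {q} - 1) = 0"
    using squeeze(2) ge_q by (simp add: integral_step_weight algebra_simps)
  ultimately have prob_q: "prob {q} = 1/2"
    by simp
  have "prob {s \<in> {sl..su}. s < sm} = prob (space P - {q})"
  proof (rule measure_eq_AE)
    show "AE s in P. s \<in> {s \<in> {sl..su}. s < sm} \<longleftrightarrow> s \<in> space P - {q}"
      using concentrated AE_space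
      by eventually_elim (use squeeze(1) \<open>q \<noteq> sm\<close> in \<open>auto simp: space_P\<close>)
  qed (auto simp: sets_P space_P q_in)
  also have "\<dots> = 1/2"
    using prob_compl[of "{q}"] prob_q q_in by (simp add: sets_P)
  finally show ?thesis
    using squeeze(1) prob_q by (simp add: matched_district_def q_def)
qed

end

lemma cdf_upper_median_eq_if_matched:
  assumes "P \<in> space (prob_algebra (type_space sl su))" and "matched_district P t"
  shows "cdf G (upper_median P) = (\<integral>s. seat_weight s \<partial>P)"
  using assms by (simp add: upper_median_matched_district integral_seat_weight_matched_district)

lemma wins_matched_district:
  assumes "P \<in> space (prob_algebra (type_space sl su))" and "matched_district P t"
  shows "wins v P r \<longleftrightarrow> r \<le> t"
  using assms by (simp add: wins_iff_le_upper_median[OF v_eq] upper_median_matched_district)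

lemma matched_two_point_district:
  assumes "a \<in> {sl..su}" "a < sm" "b \<in> {sl..su}" "sm \<le> b"
  shows "matched_district (two_point_district (type_space sl su) a b) b"
proof -
  have a: "a \<in> space (type_space sl su)" and b: "b \<in> space (type_space sl su)"
    using assms(1,3) by simp_all
  have sets: "{b} \<in> sets (type_space sl su)" "{s \<in> {sl..su}. s < sm} \<in> sets (type_space sl su)"
    using assms(3) by (auto simp: sets_type_space_iff)
  have "indicator {b} a = (0::real)" "indicator {s \<in> {sl..su}. s < sm} a = (1::real)"
    "indicator {s \<in> {sl..su}. s < sm} b = (0::real)"
    using assms by (auto simp: indicator_def)
  then show ?thesis
    unfolding matched_district_def measure_two_point_district[OF a b sets(1)]
      measure_two_point_district[OF a b sets(2)]
    using assms(4) by simp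
qed

lemma seat_share_eq:
  assumes H: "districting_plan sl su F H"
  shows "seat_share G v H = (\<integral>\<^sup>+P. ennreal (cdf G (upper_median P)) \<partial>H)"
proof -
  have "{r. wins v P r} = {..upper_median P}" if "P \<in> space H" for P
    using wins_iff_le_upper_median[OF v_eq] that by (auto simp: districting_planD(3)[OF H])
  then show ?thesis
    unfolding seat_share_def by (intro nn_integral_cong) (simp add: cdf_def G.emeasure_eq_measure)
qed

lemma nn_integral_seat_weight:
  assumes "P \<in> space (prob_algebra (type_space sl su))"
  shows "(\<integral>\<^sup>+s. ennreal (seat_weight s) \<partial>P) = ennreal (\<integral>s. seat_weight s \<partial>P)"
  using assms by (intro nn_integral_eq_integral integrable_seat_weight) (auto simp: seat_weight_nonneg)

lemma seat_share_le:
  assumes H: "districting_plan sl su F H"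
  shows "seat_share G v H \<le> (\<integral>\<^sup>+s. ennreal (seat_weight s) \<partial>F)"
proof -
  have "seat_share G v H \<le> (\<integral>\<^sup>+P. (\<integral>\<^sup>+s. ennreal (seat_weight s) \<partial>P) \<partial>H)"
    unfolding seat_share_eq[OF H]
    by (intro nn_integral_mono)
       (simp add: districting_planD(3)[OF H] nn_integral_seat_weight ennreal_leI
         cdf_upper_median_le_integral_seat_weight)
  also have "\<dots> = (\<integral>\<^sup>+s. ennreal (seat_weight s) \<partial>F)"
    by (intro nn_integral_districting_plan[OF H prob_space_F sets_F] measurable_type_space) simp
  finally show ?thesis .
qed

lemma seat_share_eq_bound_iff:
  assumes H: "districting_plan sl su F H"
  shows "seat_share G v H = (\<integral>\<^sup>+s. ennreal (seat_weight s) \<partial>F) \<longleftrightarrow>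
    (AE P in H. cdf G (upper_median P) = (\<integral>s. seat_weight s \<partial>P))"
proof -
  interpret H: prob_space H
    using districting_planD(1)[OF H] .
  have space_H: "space H = space (prob_algebra (type_space sl su))"
    using districting_planD(3)[OF H] .
  have "(\<integral>\<^sup>+s. ennreal (seat_weight s) \<partial>F) = (\<integral>\<^sup>+P. ennreal (\<integral>s. seat_weight s \<partial>P) \<partial>H)"
    by (subst nn_integral_districting_plan[OF H prob_space_F sets_F, symmetric])
       (auto simp: space_H nn_integral_seat_weight intro!: nn_integral_cong measurable_type_space)
  moreover have "(\<integral>\<^sup>+P. ennreal (cdf G (upper_median P)) \<partial>H) = (\<integral>\<^sup>+P. ennreal (\<integral>s. seat_weight s \<partial>P) \<partial>H)
      \<longleftrightarrow> (AE P in H. cdf G (upper_median P) = (\<integral>s. seat_weight s \<partial>P))"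
  proof (rule H.nn_integral_eq_iff_AE_eq)
    show "(\<lambda>P. cdf G (upper_median P)) \<in> borel_measurable H" "(\<lambda>P. \<integral>s. seat_weight s \<partial>P) \<in> borel_measurable H"
      using borel_measurable_upper_median
      by (simp_all add: measurable_cong_sets[OF districting_planD(2)[OF H] refl])
    fix P assume "P \<in> space H"
    then show "0 \<le> cdf G (upper_median P) \<and> cdf G (upper_median P) \<le> (\<integral>s. seat_weight s \<partial>P) \<and>
        (\<integral>s. seat_weight s \<partial>P) \<le> 2"
      using G.cdf_nonneg cdf_upper_median_le_integral_seat_weight integral_seat_weight_bounds(2)
      by (simp add: space_H)
  qed
  ultimately show ?thesis
    by (simp add: seat_share_eq[OF H])
qed

lemma exists_plan_attaining_seat_share_bound:
  obtains H where "districting_plan sl su F H"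
    and "seat_share G v H = (\<integral>\<^sup>+s. ennreal (seat_weight s) \<partial>F)"
proof -
  let ?M = "type_space sl su"
  define Lo where "Lo = {s \<in> {sl..su}. s < sm}"
  have Lo: "Lo \<in> sets ?M" and F_Lo: "measure F Lo = 1/2"
    using F_below_median by (auto simp: Lo_def sets_type_space_iff)
  note plan = districting_plan_pairing_plan[OF prob_space_F sets_F Lo F_Lo]
  have "AE P in pairing_plan sl su F Lo. cdf G (upper_median P) = (\<integral>s. seat_weight s \<partial>P)"
  proof (rule AE_pairing_plan[OF prob_space_F sets_F Lo F_Lo])
    show "{P \<in> space (prob_algebra ?M). cdf G (upper_median P) = (\<integral>s. seat_weight s \<partial>P)}
        \<in> sets (prob_algebra ?M)"
      using borel_measurable_upper_median borel_measurable_integral_seat_weight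
      by (intro measurable_equality_set measurable_compose[OF _ borel_measurable_cdf_G])
    fix a b assume "a \<in> Lo" "b \<in> {sl..su} - Lo"
    then have "a \<in> {sl..su}" "a < sm" "b \<in> {sl..su}" "sm \<le> b"
      by (auto simp: Lo_def)
    then have "two_point_district ?M a b \<in> space (prob_algebra ?M)"
      and "matched_district (two_point_district ?M a b) b"
      by (simp_all add: two_point_district_in_prob_algebra matched_two_point_district)
    then show "cdf G (upper_median (two_point_district ?M a b)) = (\<integral>s. seat_weight s \<partial>two_point_district ?M a b)"
      by (rule cdf_upper_median_eq_if_matched)
  qed
  then show ?thesis
    using that plan seat_share_eq_bound_iff[OF plan] by blast
qed

lemma optimal_plan_iff_seat_share_eq_bound:
  "optimal_plan sl su F G v H \<longleftrightarrow>
     districting_plan sl su F H \<and> seat_share G v H = (\<integral>\<^sup>+s. ennreal (seat_weight s) \<partial>F)"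
proof -
  obtain H0 where H0: "districting_plan sl su F H0"
    and bound: "seat_share G v H0 = (\<integral>\<^sup>+s. ennreal (seat_weight s) \<partial>F)"
    by (rule exists_plan_attaining_seat_share_bound)
  show ?thesis
  proof
    assume "optimal_plan sl su F G v H"
    then have H: "districting_plan sl su F H" and "seat_share G v H0 \<le> seat_share G v H"
      using H0 by (auto simp: optimal_plan_def)
    then show "districting_plan sl su F H \<and> seat_share G v H = (\<integral>\<^sup>+s. ennreal (seat_weight s) \<partial>F)"
      using seat_share_le[OF H] bound by (auto intro: antisym)
  next
    assume "districting_plan sl su F H \<and> seat_share G v H = (\<integral>\<^sup>+s. ennreal (seat_weight s) \<partial>F)"
    then show "optimal_plan sl su F G v H"
      using seat_share_le by (simp add: optimal_plan_def)
  qed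
qed

lemma AE_cdf_eq_iff_AE_matched_district:
  assumes H: "districting_plan sl su F H"
  shows "(AE P in H. cdf G (upper_median P) = (\<integral>s. seat_weight s \<partial>P)) \<longleftrightarrow>
    (AE P in H. \<exists>t. matched_district P t)"
proof
  assume "AE P in H. cdf G (upper_median P) = (\<integral>s. seat_weight s \<partial>P)"
  moreover have "AE P in H. measure P {sm} = 0"
    using median_in_type_space F_median_null
    by (intro AE_districting_plan_null[OF H prob_space_F sets_F]) (simp_all add: sets_type_space_iff)
  ultimately show "AE P in H. \<exists>t. matched_district P t"
    using AE_space by eventually_elim (metis districting_planD(3)[OF H] matched_district_if_cdf_eq)
next
  assume "AE P in H. \<exists>t. matched_district P t"
  then show "AE P in H. cdf G (upper_median P) = (\<integral>s. seat_weight s \<partial>P)"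
    using AE_space by eventually_elim (metis districting_planD(3)[OF H] cdf_upper_median_eq_if_matched)
qed

theorem optimal_plan_iff_matched:
  "optimal_plan sl su F G v H \<longleftrightarrow>
     districting_plan sl su F H \<and> (AE P in H. \<exists>t. matched_district P t)"
  using optimal_plan_iff_seat_share_eq_bound seat_share_eq_bound_iff AE_cdf_eq_iff_AE_matched_district
  by blast

lemma AE_wins_iff_if_optimal_plan:
  assumes "optimal_plan sl su F G v H"
  shows "AE P in H. \<exists>t. matched_district P t \<and> (\<forall>r. wins v P r \<longleftrightarrow> r \<le> t)"
proof -
  have H: "districting_plan sl su F H" and "AE P in H. \<exists>t. matched_district P t"
    using assms optimal_plan_iff_matched by auto
  from this(2) AE_space show ?thesis
    by eventually_elim (metis districting_planD(3)[OF H] wins_matched_district)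
qed

end

theorem proposition3:
  fixes sl su sm :: real
    and f g :: "real \<Rightarrow> real"
    and F G :: "real measure"
    and v :: "real \<Rightarrow> real \<Rightarrow> real"
    and H :: "real measure measure"
  assumes F_def: "F = density (restrict_space lborel {sl..su}) (\<lambda>s. ennreal (f s))"
    and f_meas: "f \<in> borel_measurable borel"
    and f_pos: "\<forall>s \<in> {sl..su}. f s > 0"
    and F_prob: "prob_space F"
    and G_def: "G = density lborel (\<lambda>r. ennreal (g r))"
    and g_meas: "g \<in> borel_measurable borel"
    and g_pos: "\<forall>r. g r > 0"
    and G_prob: "prob_space G"
    and v_def: "\<forall>s r. v s r = (if r \<le> s then 1 else 0)"
    and median: "sm \<in> {sl..su}" "measure F {s \<in> {sl..su}. s \<le> sm} = 1/2"
  shows "(optimal_plan sl su F G v H \<longleftrightarrow>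
            districting_plan sl su F H \<and>
            (AE P in H. \<exists>sP \<ge> sm. measure P {sP} = 1/2 \<and>
                                   measure P {s \<in> {sl..su}. s < sm} = 1/2))
       \<and> (optimal_plan sl su F G v H \<longrightarrow>
            (AE P in H. \<exists>sP \<ge> sm. measure P {sP} = 1/2 \<and>
                                   measure P {s \<in> {sl..su}. s < sm} = 1/2 \<and>
                                   (\<forall>r. wins v P r \<longleftrightarrow> r \<le> sP)))"
proof -
  interpret median_districting sl su sm F G v
  proof (rule median_districting.intro)
    show "sets F = sets (type_space sl su)"
      by (simp add: F_def type_space_def sets_restrict_space)
    show "measure F {sm} = 0"
      unfolding F_def using f_meas by (rule measure_density_restrict_lborel_singleton) simp
    show "real_distribution G"
      using G_prob by (simp add: real_distribution_def real_distribution_axioms_def G_def)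
    show "strict_mono (cdf G)"
      using g_meas g_pos G_prob unfolding G_def by (rule strict_mono_cdf_density_lborel)
  qed (use F_prob v_def median in simp_all)
  show ?thesis
    using optimal_plan_iff_matched AE_wins_iff_if_optimal_plan
    unfolding matched_district_def conj_assoc by blast
qed

end
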